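(* Let $D\in(0,1]$ and define $\mathcal F_{\bm B}:=\{r_2\in[\underline x,\bar x]:(\bm R\bm c^m)^\top G_{\bm B}(r_2)\le D\}$, $\mathcal F_{\bm A}:=\{(r_1,r_3,p)\in F:(\bm R\bm c^m)^\top G_{\bm A}(r_1,r_3,p)\le D\}$, $\vartheta_{\bm B}:=\max\{(\bm R\bm v_1^m)^\top G_{\bm B}(r_2):r_2\in\mathcal F_{\bm B}\}$, $\vartheta_{\bm A}:=\max\{(\bm R\bm v_2^m)^\top G_{\bm A}(r_1,r_3,p):(r_1,r_3,p)\in\mathcal F_{\bm A}\}$, $\mathcal S_{\bm B}:=\{r_2\in\mathcal F_{\bm B}:(\bm R\bm v_1^m)^\top G_{\bm B}(r_2)=\vartheta_{\bm B}\}$, $\mathcal S_{\bm A}:=\{(r_1,r_3,p)\in\mathcal F_{\bm A}:(\bm R\bm v_2^m)^\top G_{\bm A}(r_1,r_3,p)=\vartheta_{\bm A}\}$, $\mathcal F_{\bm B}^{=}:=\{r_2\in[\underline x,\bar x]:(\bm R\bm c^m)^\top G_{\bm B}(r_2)=D\}$ and $\mathcal F_{\bm A}^{=}:=\{(r_1,r_3,p)\in F:(\bm R\bm c^m)^\top G_{\bm A}(r_1,r_3,p)=D\}$. Then for every $(r_1^m,r_3^m,p^m)\in\mathcal S_{\bm A}\cap\mathcal F_{\bm A}^{=}$ and every $r_2^m\in\mathcal S_{\bm B}\cap\mathcal F_{\bm B}^{=}$ we have $r_1^m\le r_2^m\le r_3^m$.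
   Context: Let $N\ge3$ be an integer and $\underline x=x_1<x_2<\cdots<x_N=\bar x$ real numbers; $\bm e$ denotes the all-ones vector of the appropriate dimension. Define $\bm g:[\underline x,\bar x]\to\mathbb R^{N-1}$ by $\bm g(x_1)=\bm 0$ and, for $x\in(x_i,x_{i+1}]$ ($i\in\{1,\dots,N-1\}$), $\bm g(x)=(1,\dots,1,\frac{x-x_i}{x_{i+1}-x_i},0,\dots,0)$ with the first $i-1$ entries equal to $1$, the $i$-th entry $\frac{x-x_i}{x_{i+1}-x_i}$ and the last $N-1-i$ entries $0$. For $\bm v\in\mathbb R^{N-2}$ let $\bm R\bm v:=(v_1,\dots,v_{N-2},1-\bm e^\top\bm v)\in\mathbb R^{N-1}$. Define $G_{\bm A}(r_1,r_3,p):=(1-p)\bm g(r_1)+p\,\bm g(r_3)$, $G_{\bm B}(r_2):=\bm g(r_2)$, and $F:=\{(r_1,r_3,p)\in[\underline x,\bar x]\times[\underline x,\bar x]\times[0,1]: r_1\le r_3\}$. Fix $m\ge1$ and data $(r_1^k,r_3^k,p^k)\in F$, $r_2^k\in[\underline x,\bar x]$, $l_k\in\{-1,1\}$ for $k=1,\dots,m-1$. Let $\mathcal V^{m-1}:=\{\bm v\in\mathbb R^{N-2}: v_i\ge0\ (i=1,\dots,N-2),\ \bm e^\top\bm v\le1,\ l_k(\bm R\bm v)^\top(G_{\bm A}(r_1^k,r_3^k,p^k)-G_{\bm B}(r_2^k))\le0\ (k=1,\dots,m-1)\}$, assumed to have nonempty interior; write its defining inequalities as $\tilde{\bm a}_i^\top\bm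 v\le\tilde b_i$. Let $\bm c^m$ be its analytic center, i.e. the maximizer over the interior of $\mathcal V^{m-1}$ of $\sum_i\log(\tilde b_i-\tilde{\bm a}_i^\top\bm v)$; in particular $c^m_i>0$ for all $i$ and $1-\bm e^\top\bm c^m>0$. Let $\bm H:=\sum_i\tilde{\bm a}_i\tilde{\bm a}_i^\top/(\tilde b_i-\tilde{\bm a}_i^\top\bm c^m)^2$ (Sonnevend's inner ellipsoid is $\{\bm v:(\bm v-\bm c^m)^\top\bm H(\bm v-\bm c^m)\le1\}$), and let $\bm v_1^m,\bm v_2^m\in\mathcal V^{m-1}$ be the two points (in some fixed order) where the line through $\bm c^m$ in the direction of the longest axis of this ellipsoid meets the boundary of $\mathcal V^{m-1}$. *)

theory Defs
  imports Complex_Main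
begin

text \<open>Vectors are represented as functions nat => real with 1-based indices:
  vectors in R^(N-2) use indices 1..N-2 (and are zero elsewhere, see Espace),
  vectors in R^(N-1) use indices 1..N-1.  The grid is x :: nat => real, x 1 < ... < x N.\<close>

definition gv :: "nat \<Rightarrow> (nat \<Rightarrow> real) \<Rightarrow> real \<Rightarrow> nat \<Rightarrow> real" where
  "gv N x r =
    (if r = x 1 then (\<lambda>j. 0)
     else (let i = (THE i. 1 \<le> i \<and> i \<le> N - 1 \<and> x i < r \<and> r \<le> x (Suc i))
           in (\<lambda>j. if j < i then 1
                   else if j = i then (r - x i) / (x (Suc i) - x i)
                   else 0)))"

definition Rv :: "nat \<Rightarrow> (nat \<Rightarrow> real) \<Rightarrow> nat \<Rightarrow> real" where
  "Rv N v = (\<lambda>j. if j = N - 1 then 1 - (\<Sum>i=1..N-2. v i) else v j)"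

definition ipN :: "nat \<Rightarrow> (nat \<Rightarrow> real) \<Rightarrow> (nat \<Rightarrow> real) \<Rightarrow> real" where
  "ipN N a b = (\<Sum>j=1..N-1. a j * b j)"

definition GA :: "nat \<Rightarrow> (nat \<Rightarrow> real) \<Rightarrow> real \<Rightarrow> real \<Rightarrow> real \<Rightarrow> nat \<Rightarrow> real" where
  "GA N x r1 r3 p = (\<lambda>j. (1 - p) * gv N x r1 j + p * gv N x r3 j)"

definition GB :: "nat \<Rightarrow> (nat \<Rightarrow> real) \<Rightarrow> real \<Rightarrow> nat \<Rightarrow> real" where
  "GB N x r2 = gv N x r2"

definition Fset :: "nat \<Rightarrow> (nat \<Rightarrow> real) \<Rightarrow> (real \<times> real \<times> real) set" where
  "Fset N x = {(r1, r3, p). r1 \<in> {x 1..x N} \<and> r3 \<in> {x 1..x N} \<and> p \<in> {0..1} \<and> r1 \<le> r3}"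

definition Espace :: "nat \<Rightarrow> (nat \<Rightarrow> real) set" where
  "Espace N = {v. \<forall>i. i \<notin> {1..N-2} \<longrightarrow> v i = 0}"

definition distE :: "nat \<Rightarrow> (nat \<Rightarrow> real) \<Rightarrow> (nat \<Rightarrow> real) \<Rightarrow> real" where
  "distE N v w = sqrt (\<Sum>i=1..N-2. (v i - w i)^2)"

text \<open>Interior (w.r.t. the Euclidean topology of R^(N-2)) of a subset of Espace N.\<close>
definition interiorE :: "nat \<Rightarrow> (nat \<Rightarrow> real) set \<Rightarrow> (nat \<Rightarrow> real) set" where
  "interiorE N S = {v \<in> S \<inter> Espace N. \<exists>\<epsilon>>0. \<forall>w\<in>Espace N. distE N v w < \<epsilon> \<longrightarrow> w \<in> S}"

definition dvec :: "nat \<Rightarrow> (nat \<Rightarrow> real) \<Rightarrow> (nat \<Rightarrow> real) \<Rightarrow> (nat \<Rightarrow> real) \<Rightarrow> (nat \<Rightarrow> real)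
      \<Rightarrow> (nat \<Rightarrow> real) \<Rightarrow> nat \<Rightarrow> nat \<Rightarrow> real" where
  "dvec N x r1s r3s ps r2s k = (\<lambda>j. GA N x (r1s k) (r3s k) (ps k) j - GB N x (r2s k) j)"

definition Vset :: "nat \<Rightarrow> (nat \<Rightarrow> real) \<Rightarrow> nat \<Rightarrow> (nat \<Rightarrow> real) \<Rightarrow> (nat \<Rightarrow> real) \<Rightarrow> (nat \<Rightarrow> real)
      \<Rightarrow> (nat \<Rightarrow> real) \<Rightarrow> (nat \<Rightarrow> real) \<Rightarrow> (nat \<Rightarrow> real) set" where
  "Vset N x m r1s r3s ps r2s l =
     {v \<in> Espace N. (\<forall>i\<in>{1..N-2}. 0 \<le> v i) \<and> (\<Sum>i=1..N-2. v i) \<le> 1 \<and>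
        (\<forall>k\<in>{1..m-1}. l k * ipN N (Rv N v) (dvec N x r1s r3s ps r2s k) \<le> 0)}"

definition slackk :: "nat \<Rightarrow> (nat \<Rightarrow> real) \<Rightarrow> (nat \<Rightarrow> real) \<Rightarrow> (nat \<Rightarrow> real) \<Rightarrow> (nat \<Rightarrow> real)
      \<Rightarrow> (nat \<Rightarrow> real) \<Rightarrow> (nat \<Rightarrow> real) \<Rightarrow> nat \<Rightarrow> (nat \<Rightarrow> real) \<Rightarrow> real" where
  "slackk N x r1s r3s ps r2s l k v = - (l k * ipN N (Rv N v) (dvec N x r1s r3s ps r2s k))"

text \<open>Normal vector a_k (on indices 1..N-2) of the k-th data constraint, since
  l_k (Rv)^T d = sum_i v_i l_k (d_i - d_(N-1)) + l_k d_(N-1).\<close>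
definition avec :: "nat \<Rightarrow> (nat \<Rightarrow> real) \<Rightarrow> (nat \<Rightarrow> real) \<Rightarrow> (nat \<Rightarrow> real) \<Rightarrow> (nat \<Rightarrow> real)
      \<Rightarrow> (nat \<Rightarrow> real) \<Rightarrow> (nat \<Rightarrow> real) \<Rightarrow> nat \<Rightarrow> nat \<Rightarrow> real" where
  "avec N x r1s r3s ps r2s l k =
     (\<lambda>j. l k * (dvec N x r1s r3s ps r2s k j - dvec N x r1s r3s ps r2s k (N - 1)))"

definition barrier :: "nat \<Rightarrow> (nat \<Rightarrow> real) \<Rightarrow> nat \<Rightarrow> (nat \<Rightarrow> real) \<Rightarrow> (nat \<Rightarrow> real) \<Rightarrow> (nat \<Rightarrow> real)
      \<Rightarrow> (nat \<Rightarrow> real) \<Rightarrow> (nat \<Rightarrow> real) \<Rightarrow> (nat \<Rightarrow> real) \<Rightarrow> real" where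
  "barrier N x m r1s r3s ps r2s l v =
     (\<Sum>i=1..N-2. ln (v i)) + ln (1 - (\<Sum>i=1..N-2. v i)) +
     (\<Sum>k=1..m-1. ln (slackk N x r1s r3s ps r2s l k v))"

text \<open>H = sum_i a_i a_i^T / slack_i(c)^2, entries for indices 1..N-2
  (normals: -e_i for v_i >= 0, e for e^T v <= 1, avec k for the data constraints).\<close>
definition Hmat :: "nat \<Rightarrow> (nat \<Rightarrow> real) \<Rightarrow> nat \<Rightarrow> (nat \<Rightarrow> real) \<Rightarrow> (nat \<Rightarrow> real) \<Rightarrow> (nat \<Rightarrow> real)
      \<Rightarrow> (nat \<Rightarrow> real) \<Rightarrow> (nat \<Rightarrow> real) \<Rightarrow> (nat \<Rightarrow> real) \<Rightarrow> nat \<Rightarrow> nat \<Rightarrow> real" where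
  "Hmat N x m r1s r3s ps r2s l c =
     (\<lambda>j j'. (\<Sum>i=1..N-2. (if j = i then 1 else 0) * (if j' = i then 1 else 0) / (c i)^2)
            + 1 / (1 - (\<Sum>i=1..N-2. c i))^2
            + (\<Sum>k=1..m-1. avec N x r1s r3s ps r2s l k j * avec N x r1s r3s ps r2s l k j'
                              / (slackk N x r1s r3s ps r2s l k c)^2))"

definition matvec :: "nat \<Rightarrow> (nat \<Rightarrow> nat \<Rightarrow> real) \<Rightarrow> (nat \<Rightarrow> real) \<Rightarrow> nat \<Rightarrow> real" where
  "matvec N H d = (\<lambda>j. \<Sum>j'=1..N-2. H j j' * d j')"

text \<open>d is a direction of the longest axis of the ellipsoid {v. (v-c)^T H (v-c) <= 1}, i.e. an
  eigenvector of H for its smallest eigenvalue.\<close>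
definition longest_axis_dir :: "nat \<Rightarrow> (nat \<Rightarrow> nat \<Rightarrow> real) \<Rightarrow> (nat \<Rightarrow> real) \<Rightarrow> bool" where
  "longest_axis_dir N H d \<longleftrightarrow> d \<in> Espace N \<and> d \<noteq> (\<lambda>_. 0) \<and>
     (\<exists>lam. (\<forall>j\<in>{1..N-2}. matvec N H d j = lam * d j) \<and>
          (\<forall>\<mu> w. w \<in> Espace N \<and> w \<noteq> (\<lambda>_. 0) \<and> (\<forall>j\<in>{1..N-2}. matvec N H w j = \<mu> * w j)
                 \<longrightarrow> lam \<le> \<mu>))"

end

theory Submission
  imports Defs
begin

text \<open>Since \<open>c\<^sup>m\<close> lies in the interior of the simplex, the weights \<open>R c\<^sup>m\<close> are positive.
  Every coordinate of \<open>g\<close> is a nondecreasing ramp, and the ramp of the grid segment containing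
  \<open>r\<close> is strictly increasing at \<open>r\<close>; hence \<open>f r := (R c\<^sup>m)\<^sup>T g r\<close> is strictly increasing on
  \<open>[x\<^sub>1, x\<^sub>N]\<close>. On the level sets, \<open>f r\<^sub>2 = D = (1 - p) f r\<^sub>1 + p f r\<^sub>3\<close> with \<open>f r\<^sub>1 \<le> f r\<^sub>3\<close>, so
  \<open>f r\<^sub>1 \<le> f r\<^sub>2 \<le> f r\<^sub>3\<close>, which gives \<open>r\<^sub>1 \<le> r\<^sub>2 \<le> r\<^sub>3\<close>.\<close>

lemma grid_strict_mono_on:
  fixes x :: "nat \<Rightarrow> 'a::order"
  assumes "\<forall>i\<in>{1..<N}. x i < x (Suc i)"
  shows "strict_mono_on {1..N} x"
proof (rule strict_mono_onI)
  fix a b :: nat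
  assume "a \<in> {1..N}" "b \<in> {1..N}" "a < b"
  then show "x a < x b"
  proof (induction b)
    case 0
    then show ?case by simp
  next
    case (Suc b)
    then have "x a \<le> x b" by (cases "a = b") auto
    moreover have "x b < x (Suc b)" using Suc assms by auto
    ultimately show ?case by (rule le_less_trans)
  qed
qed

lemma segment_index_exists:
  fixes x :: "nat \<Rightarrow> 'a::linorder"
  assumes "1 \<le> N" "x 1 < r" "r \<le> x N"
  shows "\<exists>i. 1 \<le> i \<and> i < N \<and> x i < r \<and> r \<le> x (Suc i)"
  using assms(1,3)
proof (induction N rule: nat_induct_at_least)
  case base
  then show ?case using assms(2) by simp
next
  case (Suc n)
  show ?case
  proof (cases "x n < r")
    case True
    then show ?thesis using Suc by auto
  next
    case False
    then show ?thesis using Suc.IH by (meson less_SucI not_less)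
  qed
qed

lemma segment_index_unique:
  fixes x :: "nat \<Rightarrow> 'a::linorder"
  assumes x: "strict_mono_on {1..N} x"
    and i: "1 \<le> i" "i < N" "x i < r" "r \<le> x (Suc i)"
    and j: "1 \<le> j" "j < N" "x j < r" "r \<le> x (Suc j)"
  shows "i = j"
proof (rule ccontr)
  have no_later: False if "1 \<le> k" "k < k'" "k' < N" "r \<le> x (Suc k)" "x k' < r" for k k'
    using strict_mono_on_leD[OF x, of "Suc k" k'] that by auto
  assume "i \<noteq> j"
  then show False
    using no_later[of i j] no_later[of j i] i j by linarith
qed

definition ramp :: "(nat \<Rightarrow> real) \<Rightarrow> nat \<Rightarrow> real \<Rightarrow> real" where
  "ramp x j r = max 0 (min 1 ((r - x j) / (x (Suc j) - x j)))"

lemma ramp_eq_0: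
  assumes "x j < x (Suc j)" "r \<le> x j"
  shows "ramp x j r = 0"
proof -
  have "(r - x j) / (x (Suc j) - x j) \<le> 0"
    using assms by (intro divide_nonpos_pos) auto
  then show ?thesis unfolding ramp_def by simp
qed

lemma ramp_eq_1:
  assumes "x j < x (Suc j)" "x (Suc j) \<le> r"
  shows "ramp x j r = 1"
proof -
  have "1 \<le> (r - x j) / (x (Suc j) - x j)"
    using assms by (simp add: field_simps)
  then show ?thesis unfolding ramp_def by simp
qed

lemma ramp_eq_ratio:
  assumes "x j < x (Suc j)" "x j \<le> r" "r \<le> x (Suc j)"
  shows "ramp x j r = (r - x j) / (x (Suc j) - x j)"
proof -
  have "0 \<le> (r - x j) / (x (Suc j) - x j)" "(r - x j) / (x (Suc j) - x j) \<le> 1"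
    using assms by (simp_all add: field_simps)
  then show ?thesis unfolding ramp_def by simp
qed

lemma ramp_mono:
  assumes "x j < x (Suc j)" "a \<le> b"
  shows "ramp x j a \<le> ramp x j b"
proof -
  have "(a - x j) / (x (Suc j) - x j) \<le> (b - x j) / (x (Suc j) - x j)"
    using assms by (intro divide_right_mono) auto
  then show ?thesis unfolding ramp_def by linarith
qed

lemma ramp_strict_mono_at_segment:
  assumes "x j < x (Suc j)" "a < b" "x j < b" "b \<le> x (Suc j)"
  shows "ramp x j a < ramp x j b"
proof -
  have b: "ramp x j b = (b - x j) / (x (Suc j) - x j)"
    using assms by (intro ramp_eq_ratio) auto
  show ?thesis
  proof (cases "a \<le> x j")
    case True
    then show ?thesis using ramp_eq_0[OF assms(1) True] b assms by simp
  next
    case False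
    then have "ramp x j a = (a - x j) / (x (Suc j) - x j)"
      using assms by (intro ramp_eq_ratio) auto
    then show ?thesis using b assms by (simp add: divide_strict_right_mono)
  qed
qed

lemma gv_eq_ramp:
  assumes x: "strict_mono_on {1..N} x"
    and r: "r \<in> {x 1..x N}" and j: "1 \<le> j" "j < N"
  shows "gv N x r j = ramp x j r"
proof -
  have step: "x k < x (Suc k)" if "1 \<le> k" "k < N" for k
    using strict_mono_onD[OF x] that by auto
  show ?thesis
  proof (cases "r = x 1")
    case True
    then have "r \<le> x j" using strict_mono_on_leD[OF x, of 1 j] j by auto
    then show ?thesis using True ramp_eq_0[OF step[OF j]] unfolding gv_def by simp
  next
    case False
    then obtain i where i: "1 \<le> i" "i < N" "x i < r" "r \<le> x (Suc i)"
      using segment_index_exists[of N x r] r j by auto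
    have "(THE i. 1 \<le> i \<and> i \<le> N - 1 \<and> x i < r \<and> r \<le> x (Suc i)) = i"
    proof (rule the_equality)
      show "1 \<le> i \<and> i \<le> N - 1 \<and> x i < r \<and> r \<le> x (Suc i)" using i by simp
    next
      fix i' assume "1 \<le> i' \<and> i' \<le> N - 1 \<and> x i' < r \<and> r \<le> x (Suc i')"
      then have "1 \<le> i'" "i' < N" "x i' < r" "r \<le> x (Suc i')" using i by auto
      then show "i' = i" using segment_index_unique[OF x _ _ _ _ i] by blast
    qed
    then have gv: "gv N x r j = (if j < i then 1 else if j = i then (r - x i) / (x (Suc i) - x i) else 0)"
      using False unfolding gv_def by (simp add: Let_def)
    consider "j < i" | "j = i" | "i < j" by linarith
    then show ?thesis
    proof cases
      case 1
      then have "x (Suc j) \<le> r" using strict_mono_on_leD[OF x, of "Suc j" i] i by auto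
      then show ?thesis using 1 gv ramp_eq_1[OF step[OF j]] by simp
    next
      case 2
      then show ?thesis using gv i ramp_eq_ratio[OF step[OF j]] by simp
    next
      case 3
      then have "r \<le> x j" using strict_mono_on_leD[OF x, of "Suc i" j] i j by auto
      then show ?thesis using 3 gv ramp_eq_0[OF step[OF j]] by simp
    qed
  qed
qed

lemma ipN_gv_strict_mono_on:
  assumes x: "strict_mono_on {1..N} x" and N: "1 \<le> N"
    and w: "\<forall>j\<in>{1..N-1}. 0 < w j"
  shows "strict_mono_on {x 1..x N} (\<lambda>r. ipN N w (gv N x r))"
proof (rule strict_mono_onI)
  fix a b assume a: "a \<in> {x 1..x N}" and b: "b \<in> {x 1..x N}" and ab: "a < b"
  have step: "x k < x (Suc k)" if "k \<in> {1..N-1}" for k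
    using strict_mono_onD[OF x] that by auto
  have sum_ramp: "ipN N w (gv N x r) = (\<Sum>j=1..N-1. w j * ramp x j r)" if "r \<in> {x 1..x N}" for r
    unfolding ipN_def using gv_eq_ramp[OF x that] by (intro sum.cong) auto
  obtain i where i: "1 \<le> i" "i < N" "x i < b" "b \<le> x (Suc i)"
    using segment_index_exists[OF N, of x b] a b ab by auto
  have "(\<Sum>j=1..N-1. w j * ramp x j a) < (\<Sum>j=1..N-1. w j * ramp x j b)"
  proof (rule sum_strict_mono_ex1)
    show "\<forall>j\<in>{1..N-1}. w j * ramp x j a \<le> w j * ramp x j b"
    proof
      fix j assume j: "j \<in> {1..N-1}"
      have "ramp x j a \<le> ramp x j b" using ramp_mono[OF step[OF j]] ab by simp
      then show "w j * ramp x j a \<le> w j * ramp x j b"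
        using w j by (simp add: mult_left_mono less_imp_le)
    qed
    have "ramp x i a < ramp x i b"
      using ramp_strict_mono_at_segment[OF step[of i]] i ab by auto
    then show "\<exists>j\<in>{1..N-1}. w j * ramp x j a < w j * ramp x j b"
      using w i by (intro bexI[of _ i]) auto
  qed simp
  then show "ipN N w (gv N x a) < ipN N w (gv N x b)"
    using sum_ramp a b by simp
qed

lemma ipN_GA:
  "ipN N w (GA N x r1 r3 p) = (1 - p) * ipN N w (gv N x r1) + p * ipN N w (gv N x r3)"
proof -
  have "ipN N w (GA N x r1 r3 p) = (\<Sum>j=1..N-1. (1 - p) * (w j * gv N x r1 j) + p * (w j * gv N x r3 j))"
    unfolding ipN_def GA_def by (simp add: algebra_simps)
  then show ?thesis
    unfolding ipN_def by (simp add: sum.distrib sum_distrib_left)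
qed

lemma Rv_pos:
  assumes "\<forall>i\<in>{1..N-2}. 0 < c i" "(\<Sum>i=1..N-2. c i) < 1"
  shows "\<forall>j\<in>{1..N-1}. 0 < Rv N c j"
  using assms unfolding Rv_def by auto

lemma GA_GB_level_between:
  assumes x: "strict_mono_on {1..N} x" and N: "1 \<le> N"
    and w: "\<forall>j\<in>{1..N-1}. 0 < w j"
    and A: "(r1, r3, p) \<in> Fset N x" and r2: "r2 \<in> {x 1..x N}"
    and level: "ipN N w (GB N x r2) = ipN N w (GA N x r1 r3 p)"
  shows "r1 \<le> r2 \<and> r2 \<le> r3"
proof -
  define f where "f r = ipN N w (gv N x r)" for r
  have f: "strict_mono_on {x 1..x N} f"
    unfolding f_def by (rule ipN_gv_strict_mono_on[OF x N w])
  have r13: "r1 \<in> {x 1..x N}" "r3 \<in> {x 1..x N}" "r1 \<le> r3" and p: "0 \<le> p" "p \<le> 1"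
    using A unfolding Fset_def by auto
  have "f r1 \<le> f r3" using strict_mono_on_leD[OF f r13] .
  then have "0 \<le> p * (f r3 - f r1)" "0 \<le> (1 - p) * (f r3 - f r1)"
    using p by simp_all
  moreover have "f r2 = f r1 + p * (f r3 - f r1)" "f r2 = f r3 - (1 - p) * (f r3 - f r1)"
    using level unfolding f_def GB_def ipN_GA by (simp_all add: algebra_simps)
  ultimately have "f r1 \<le> f r2" "f r2 \<le> f r3" by linarith+
  then show ?thesis
    using strict_mono_on_less_eq[OF f] r13 r2 by auto
qed

theorem proposition7:
  fixes N m :: nat and x :: "nat \<Rightarrow> real"
    and r1s r3s ps r2s l :: "nat \<Rightarrow> real"
    and c v1 v2 d :: "nat \<Rightarrow> real" and D :: real
  assumes N3: "N \<ge> 3"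
    and xinc: "\<forall>i\<in>{1..<N}. x i < x (Suc i)"
    and m1: "m \<ge> 1"
    and data: "\<forall>k\<in>{1..m-1}. (r1s k, r3s k, ps k) \<in> Fset N x \<and> r2s k \<in> {x 1..x N}
                  \<and> l k \<in> {-1, 1}"
    and nonempty_int: "interiorE N (Vset N x m r1s r3s ps r2s l) \<noteq> {}"
    and c_int: "c \<in> interiorE N (Vset N x m r1s r3s ps r2s l)"
    and c_max: "\<forall>v\<in>interiorE N (Vset N x m r1s r3s ps r2s l).
                  barrier N x m r1s r3s ps r2s l v \<le> barrier N x m r1s r3s ps r2s l c"
    and c_pos: "\<forall>i\<in>{1..N-2}. c i > 0" and c_sum: "1 - (\<Sum>i=1..N-2. c i) > 0"
    and d_axis: "longest_axis_dir N (Hmat N x m r1s r3s ps r2s l c) d"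
    and v1_bd: "v1 \<in> Vset N x m r1s r3s ps r2s l - interiorE N (Vset N x m r1s r3s ps r2s l)
                \<and> (\<exists>t. v1 = (\<lambda>i. c i + t * d i))"
    and v2_bd: "v2 \<in> Vset N x m r1s r3s ps r2s l - interiorE N (Vset N x m r1s r3s ps r2s l)
                \<and> (\<exists>t. v2 = (\<lambda>i. c i + t * d i))"
    and v12: "v1 \<noteq> v2"
    and D: "0 < D" "D \<le> 1"
  shows
    "let FB = {r2 \<in> {x 1..x N}. ipN N (Rv N c) (GB N x r2) \<le> D};
         FA = {(r1, r3, p) \<in> Fset N x. ipN N (Rv N c) (GA N x r1 r3 p) \<le> D};
         \<theta>B = Sup ((\<lambda>r2. ipN N (Rv N v1) (GB N x r2)) ` FB);
         \<theta>A = Sup ((\<lambda>(r1, r3, p). ipN N (Rv N v2) (GA N x r1 r3 p)) ` FA);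
         SB = {r2 \<in> FB. ipN N (Rv N v1) (GB N x r2) = \<theta>B};
         SA = {(r1, r3, p) \<in> FA. ipN N (Rv N v2) (GA N x r1 r3 p) = \<theta>A};
         FBeq = {r2 \<in> {x 1..x N}. ipN N (Rv N c) (GB N x r2) = D};
         FAeq = {(r1, r3, p) \<in> Fset N x. ipN N (Rv N c) (GA N x r1 r3 p) = D}
     in \<forall>r1 r3 p r2. (r1, r3, p) \<in> SA \<inter> FAeq \<longrightarrow> r2 \<in> SB \<inter> FBeq \<longrightarrow> r1 \<le> r2 \<and> r2 \<le> r3"
proof -
  have x: "strict_mono_on {1..N} x" using grid_strict_mono_on[OF xinc] .
  have N: "1 \<le> N" using N3 by simp
  have w: "\<forall>j\<in>{1..N-1}. 0 < Rv N c j" using Rv_pos c_pos c_sum by simp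
  show ?thesis
    unfolding Let_def using GA_GB_level_between[OF x N w] by auto
qed

end
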